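(* Let $(x_k)_{k\ge1}$ be a sequence of non-negative reals and let $M$ be the strongest-first counting function defined in the context. Then: (1) for every fixed $t\ge1$, the map $s\mapsto M(t,(x_k)_{k=1}^t,s)$ is non-decreasing on $[0,\infty)$; (2) for every fixed $s\ge0$ and all integers $1\le t_1\le t_2$, the map $t\mapsto M(t,(x_k)_{k=1}^t,s)$ is cap-unimodal on $\{t_1,\dots,t_2\}$; in particular $\min_{t_1\le t\le t_2}M(t,(x_k)_{k=1}^t,s)=\min\{M(t_1,(x_k)_{k=1}^{t_1},s),M(t_2,(x_k)_{k=1}^{t_2},s)\}$; (3) for every fixed $s\ge0$ and all integers $1\le t_1\le t_2$, $\max_{t_1\le t\le t_2}M(t,(x_k)_{k=1}^t,s)\le t_2-t_1+M(t_1,(x_k)_{k=1}^{t_1},s)$.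
   Context: For $t\ge1$ and $(x_k)_{k=1}^t\in[0,\infty)^t$ let $x_{1,t}\le x_{2,t}\le\dots\le x_{t,t}$ be the increasing rearrangement (order statistics). The strongest-first counting function is $M(0,\varnothing,s)=0$ and, for $t\ge1$, $M(t,(x_k)_{k=1}^t,s)=0$ if $x_{t,t}>s$, and otherwise $M(t,(x_k)_{k=1}^t,s)=\max\{1\le k\le t:\sum_{j=t-k+1}^{t}x_{j,t}\le s\}$ (the maximal number of largest values which, starting with the biggest, can be summed without exceeding $s$). A function $h$ on an integer interval $\{t_1,\dots,t_2\}$ is called cap-unimodal if it is either monotone, or there is $t^*$ in the interval such that $h$ is non-decreasing on $\{t_1,\dots,t^*\}$ and non-increasing on $\{t^*,\dots,t_2\}$. *)

theory Defs
  imports Complex_Main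
begin

definition order_stats :: "nat \<Rightarrow> (nat \<Rightarrow> real) \<Rightarrow> real list" where
  "order_stats t x = sort (map x [1..<Suc t])"

definition top_sum :: "nat \<Rightarrow> (nat \<Rightarrow> real) \<Rightarrow> nat \<Rightarrow> real" where
  "top_sum t x k = sum_list (take k (rev (order_stats t x)))"

definition M :: "nat \<Rightarrow> (nat \<Rightarrow> real) \<Rightarrow> real \<Rightarrow> nat" where
  "M t x s =
     (if t = 0 then 0
      else if last (order_stats t x) > s then 0
      else Max {k. 1 \<le> k \<and> k \<le> t \<and> top_sum t x k \<le> s})"

definition cap_unimodal :: "(nat \<Rightarrow> nat) \<Rightarrow> nat \<Rightarrow> nat \<Rightarrow> bool" where
  "cap_unimodal h t1 t2 \<longleftrightarrow>
     (\<forall>a\<in>{t1..t2}. \<forall>b\<in>{t1..t2}. a \<le> b \<longrightarrow> h a \<le> h b) \<or>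
     (\<forall>a\<in>{t1..t2}. \<forall>b\<in>{t1..t2}. a \<le> b \<longrightarrow> h b \<le> h a) \<or>
     (\<exists>ts\<in>{t1..t2}.
        (\<forall>a\<in>{t1..ts}. \<forall>b\<in>{t1..ts}. a \<le> b \<longrightarrow> h a \<le> h b) \<and>
        (\<forall>a\<in>{ts..t2}. \<forall>b\<in>{ts..t2}. a \<le> b \<longrightarrow> h b \<le> h a))"

end

theory Submission
  imports Defs "HOL-Library.Multiset"
begin

(* Write T(t,k) for the sum of the k largest values among x_1,...,x_t
   (top_sum t x k).  For non-negative data, T(t,k) is non-decreasing in k (we add
   non-negative terms) and non-decreasing in t (adding a new value can only improve
   each top-k sum).  These two monotonicities give the characterisation
       k <= M(t,s)  <->  k = 0  or  (k <= t and T(t,k) <= s),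
   from which everything follows:
   (1) monotonicity in s is immediate;
   (3) M(t+1,s) <= M(t,s) + 1, since T(t,k-1) <= T(t+1,k-1) <= T(t+1,k);
   (2) M has "no recovery": once M drops at step u -> u+1, it never again exceeds
       M(u+1,s), because T(t,M(u+1,s)+1) >= T(u+1,M(u+1,s)+1) > s for t > u. *)

lemma sum_list_take_mono:
  assumes nonneg: "\<forall>y\<in>set ys. (0::real) \<le> y" and "k \<le> k'"
  shows "sum_list (take k ys) \<le> sum_list (take k' ys)"
proof -
  have split: "take k' ys = take k ys @ take (k' - k) (drop k ys)"
    using take_add[of k "k' - k" ys] \<open>k \<le> k'\<close> by simp
  have "0 \<le> sum_list (take (k' - k) (drop k ys))"
    using nonneg by (intro sum_list_nonneg) (meson in_set_dropD in_set_takeD)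
  then show ?thesis by (simp add: split)
qed

(* Inserting a non-negative value into a list never decreases the sum of the
   last k entries; this is why top-k sums grow when more data arrive. *)
lemma sum_list_take_rev_insort_mono:
  assumes "(0::real) \<le> a"
  shows "sum_list (take k (rev ys)) \<le> sum_list (take k (rev (insort a ys)))"
  using assms
proof (induction ys arbitrary: k)
  case Nil
  then show ?case by (cases k) auto
next
  case (Cons b ys)
  show ?case
  proof (cases "a \<le> b")
    case True
    (* a goes in front: the reversed list only gains the entry a at its end *)
    have "sum_list (take (k - length ys) [b]) \<le> sum_list (take (k - length ys) [b, a])"
      using Cons.prems by (cases "k - length ys"; cases "k - length ys - 1") auto
    then show ?thesis using True by (simp add: take_append)
  next
    case False
    (* b stays the largest entry; compare the remaining parts by induction *)
    have IH: "\<And>j. sum_list (take j (rev ys)) \<le> sum_list (take j (rev (insort a ys)))"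
      using Cons.IH Cons.prems by blast
    have total: "sum_list (insort a ys) = a + sum_list ys"
      by (induction ys) (auto simp: algebra_simps)
    show ?thesis
    proof (cases "k \<le> length ys")
      case True
      then show ?thesis using False IH[of k] by (simp add: take_append)
    next
      case False
      then show ?thesis using \<open>\<not> a \<le> b\<close> total Cons.prems
        by (cases "k - Suc (length ys)") (simp_all add: take_append sum_list_rev)
    qed
  qed
qed

lemma length_order_stats: "length (order_stats t x) = t"
  by (simp add: order_stats_def)

lemma order_stats_nonneg:
  assumes "\<forall>k\<ge>1. 0 \<le> x k"
  shows "\<forall>y\<in>set (order_stats t x). 0 \<le> y"
  using assms by (auto simp: order_stats_def)

lemma order_stats_Suc: "order_stats (Suc t) x = insort (x (Suc t)) (order_stats t x)"
proof -
  have "sort (map x [1..<Suc (Suc t)]) = insort (x (Suc t)) (sort (map x [1..<Suc t]))"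
    by (rule properties_for_sort) (auto simp: sorted_insort)
  then show ?thesis by (simp add: order_stats_def)
qed

(* The largest value is the top-1 sum; this links the first test in M to top_sum. *)
lemma last_order_stats_eq_top_sum_1:
  assumes "t \<ge> 1"
  shows "last (order_stats t x) = top_sum t x 1"
proof -
  have "order_stats t x \<noteq> []" using length_order_stats[of t x] assms by auto
  then show ?thesis
    by (simp add: top_sum_def take_Suc hd_rev)
qed

lemma top_sum_mono_k:
  assumes "\<forall>k\<ge>1. 0 \<le> x k" and "k \<le> k'"
  shows "top_sum t x k \<le> top_sum t x k'"
  unfolding top_sum_def using order_stats_nonneg[OF assms(1)] assms(2)
  by (intro sum_list_take_mono) auto

lemma top_sum_mono_t:
  assumes nonneg: "\<forall>k\<ge>1. 0 \<le> x k" and "t \<le> t'"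
  shows "top_sum t x k \<le> top_sum t' x k"
  using \<open>t \<le> t'\<close>
proof (induction t' rule: dec_induct)
  case (step n)
  have "top_sum n x k \<le> top_sum (Suc n) x k"
    unfolding top_sum_def order_stats_Suc using nonneg
    by (intro sum_list_take_rev_insort_mono) auto
  with step show ?case by linarith
qed simp

(* Key characterisation: M(t,s) is the largest k with k = 0 or T(t,k) <= s, and
   by monotonicity of T in k every smaller k qualifies as well. *)
lemma le_M_iff:
  assumes nonneg: "\<forall>k\<ge>1. 0 \<le> x k" and t: "t \<ge> 1"
  shows "k \<le> M t x s \<longleftrightarrow> k = 0 \<or> (k \<le> t \<and> top_sum t x k \<le> s)"
proof (cases "last (order_stats t x) > s")
  case True
  then have "M t x s = 0" by (simp add: M_def)
  moreover have "\<not> (k \<ge> 1 \<and> top_sum t x k \<le> s)"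
    using True top_sum_mono_k[OF nonneg, of 1 k t] last_order_stats_eq_top_sum_1[OF t, of x]
    by auto
  ultimately show ?thesis by auto
next
  case False
  define S where "S = {k. 1 \<le> k \<and> k \<le> t \<and> top_sum t x k \<le> s}"
  have M_eq: "M t x s = Max S" using False t by (simp add: M_def S_def)
  have "finite S" unfolding S_def by auto
  moreover have "1 \<in> S"
    using False t last_order_stats_eq_top_sum_1[OF t, of x] by (auto simp: S_def)
  ultimately have "Max S \<in> S" by (intro Max_in) auto
  show ?thesis
  proof
    assume "k \<le> M t x s"
    then show "k = 0 \<or> (k \<le> t \<and> top_sum t x k \<le> s)"
      using \<open>Max S \<in> S\<close> top_sum_mono_k[OF nonneg, of k "Max S" t] unfolding M_eq S_def
      by auto
  next
    assume "k = 0 \<or> (k \<le> t \<and> top_sum t x k \<le> s)"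
    then have "k = 0 \<or> k \<in> S" by (auto simp: S_def)
    then show "k \<le> M t x s" unfolding M_eq using \<open>finite S\<close> by auto
  qed
qed

lemma M_0: "M 0 x s = 0"
  by (simp add: M_def)

lemma M_le_length:
  assumes "\<forall>k\<ge>1. 0 \<le> x k" and "t \<ge> 1"
  shows "M t x s \<le> t"
  using le_M_iff[OF assms, of "M t x s" s] by auto

lemma M_mono_budget:
  assumes nonneg: "\<forall>k\<ge>1. 0 \<le> x k" and t: "t \<ge> 1" and "s1 \<le> s2"
  shows "M t x s1 \<le> M t x s2"
  using le_M_iff[OF nonneg t, of "M t x s1" s1] le_M_iff[OF nonneg t, of "M t x s1" s2]
    \<open>s1 \<le> s2\<close> by auto

(* One new value raises the count by at most one: drop it from the chosen top-k. *)
lemma M_Suc_le: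
  assumes nonneg: "\<forall>k\<ge>1. 0 \<le> x k" and t: "t \<ge> 1"
  shows "M (Suc t) x s \<le> Suc (M t x s)"
proof -
  define K where "K = M (Suc t) x s"
  have "K = 0 \<or> (K \<le> Suc t \<and> top_sum (Suc t) x K \<le> s)"
    using le_M_iff[OF nonneg, of "Suc t" K s] by (simp add: K_def)
  moreover have "top_sum t x (K - 1) \<le> top_sum (Suc t) x K"
    using top_sum_mono_t[OF nonneg, of t "Suc t" "K - 1"]
      top_sum_mono_k[OF nonneg, of "K - 1" K "Suc t"] by simp
  ultimately have "K - 1 \<le> M t x s"
    using le_M_iff[OF nonneg t, of "K - 1" s] by auto
  then show ?thesis by (simp add: K_def)
qed

definition no_recovery :: "(nat \<Rightarrow> nat) \<Rightarrow> bool" where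
  "no_recovery h \<longleftrightarrow> (\<forall>u t. h (Suc u) < h u \<longrightarrow> Suc u \<le> t \<longrightarrow> h t \<le> h (Suc u))"

(* After a drop at u the top-(m+1) sum with m = M(u+1,s) already exceeds s,
   and top sums only grow with t, so M stays at most m. *)
lemma M_no_recovery:
  assumes nonneg: "\<forall>k\<ge>1. 0 \<le> x k"
  shows "no_recovery (\<lambda>t. M t x s)"
  unfolding no_recovery_def
proof (intro allI impI)
  fix u t
  assume drop: "M (Suc u) x s < M u x s" and "Suc u \<le> t"
  define m where "m = M (Suc u) x s"
  have "u \<ge> 1" using drop M_0[of x s] by (cases u) auto
  then have "Suc m \<le> Suc u" using drop M_le_length[OF nonneg, of u s] by (simp add: m_def)
  then have exceeds: "s < top_sum (Suc u) x (Suc m)"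
    using le_M_iff[OF nonneg, of "Suc u" "Suc m" s] by (auto simp: m_def)
  show "M t x s \<le> m"
  proof (rule ccontr)
    assume "\<not> M t x s \<le> m"
    then have "top_sum t x (Suc m) \<le> s"
      using le_M_iff[OF nonneg, of t "Suc m" s] \<open>Suc u \<le> t\<close> by auto
    then show False
      using exceeds top_sum_mono_t[OF nonneg \<open>Suc u \<le> t\<close>, of "Suc m"] by linarith
  qed
qed

lemma mono_on_interval_by_steps:
  fixes h :: "nat \<Rightarrow> nat"
  assumes step: "\<And>u. a \<le> u \<Longrightarrow> u < b \<Longrightarrow> h u \<le> h (Suc u)"
  shows "\<forall>c\<in>{a..b}. \<forall>d\<in>{a..b}. c \<le> d \<longrightarrow> h c \<le> h d"
proof (intro ballI impI)
  fix c d assume "c \<in> {a..b}" "d \<in> {a..b}" "c \<le> d"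
  then have "a \<le> c" "d \<le> b" by auto
  show "h c \<le> h d"
    using \<open>c \<le> d\<close> \<open>d \<le> b\<close>
  proof (induction d rule: dec_induct)
    case (step n)
    then show ?case using \<open>a \<le> c\<close> assms[of n] by simp
  qed simp
qed

lemma antimono_on_interval_by_steps:
  fixes h :: "nat \<Rightarrow> nat"
  assumes "\<And>u. a \<le> u \<Longrightarrow> u < b \<Longrightarrow> h (Suc u) \<le> h u"
  shows "\<forall>c\<in>{a..b}. \<forall>d\<in>{a..b}. c \<le> d \<longrightarrow> h d \<le> h c"
proof (intro ballI impI)
  fix c d assume "c \<in> {a..b}" "d \<in> {a..b}" "c \<le> d"
  then have "a \<le> c" "d \<le> b" by auto
  show "h d \<le> h c"
    using \<open>c \<le> d\<close> \<open>d \<le> b\<close>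
  proof (induction d rule: dec_induct)
    case (step n)
    then show ?case using \<open>a \<le> c\<close> assms[of n] by simp
  qed simp
qed

(* Invariant: every value h t with t > u equals the value h (v+1) reached by some
   drop v with v < t; the next value is then at most h (v+1) = h t. *)
lemma no_recovery_antimono_after_drop:
  assumes nr: "no_recovery h" and drop: "h (Suc u) < h u" and "u \<le> t"
  shows "h (Suc t) \<le> h t"
proof -
  have nr': "\<And>v t. h (Suc v) < h v \<Longrightarrow> Suc v \<le> t \<Longrightarrow> h t \<le> h (Suc v)"
    using nr unfolding no_recovery_def by blast
  have invariant: "\<exists>v. Suc v \<le> t' \<and> h (Suc v) < h v \<and> h t' = h (Suc v)"
    if "Suc u \<le> t'" for t'
    using that
  proof (induction t' rule: dec_induct)
    case base
    then show ?case using drop by blast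
  next
    case (step n)
    then obtain v where v: "Suc v \<le> n" "h (Suc v) < h v" "h n = h (Suc v)" by blast
    have "h (Suc n) \<le> h n" using nr'[OF v(2), of "Suc n"] v by simp
    then consider "h (Suc n) < h n" | "h (Suc n) = h n" by linarith
    then show ?case
    proof cases
      case 1
      then show ?thesis by blast
    next
      case 2
      then show ?thesis using v by (auto intro!: exI[of _ v])
    qed
  qed
  show ?thesis
  proof (cases "t = u")
    case True
    then show ?thesis using drop by simp
  next
    case False
    then obtain v where "Suc v \<le> t" "h (Suc v) < h v" "h t = h (Suc v)"
      using invariant[of t] \<open>u \<le> t\<close> by auto
    then show ?thesis using nr'[of v "Suc t"] by simp
  qed
qed

(* No recovery implies cap-unimodality: increase up to the first drop, decrease after. *)
lemma no_recovery_cap_unimodal: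
  assumes nr: "no_recovery h" and "t1 \<le> t2"
  shows "cap_unimodal h t1 t2"
proof (cases "\<exists>u. t1 \<le> u \<and> u < t2 \<and> h (Suc u) < h u")
  case False
  then have "\<forall>a\<in>{t1..t2}. \<forall>b\<in>{t1..t2}. a \<le> b \<longrightarrow> h a \<le> h b"
    by (intro mono_on_interval_by_steps) (meson not_less)
  then show ?thesis unfolding cap_unimodal_def by blast
next
  case True
  define u0 where "u0 = (LEAST u. t1 \<le> u \<and> u < t2 \<and> h (Suc u) < h u)"
  have u0: "t1 \<le> u0 \<and> u0 < t2 \<and> h (Suc u0) < h u0"
    unfolding u0_def using True by (rule LeastI_ex)
  have "\<forall>a\<in>{t1..u0}. \<forall>b\<in>{t1..u0}. a \<le> b \<longrightarrow> h a \<le> h b"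
  proof (rule mono_on_interval_by_steps)
    fix u assume "t1 \<le> u" "u < u0"
    then show "h u \<le> h (Suc u)"
      using not_less_Least[of u "\<lambda>u. t1 \<le> u \<and> u < t2 \<and> h (Suc u) < h u"] u0
      unfolding u0_def[symmetric] by auto
  qed
  moreover have "\<forall>a\<in>{u0..t2}. \<forall>b\<in>{u0..t2}. a \<le> b \<longrightarrow> h b \<le> h a"
    using no_recovery_antimono_after_drop[OF nr] u0
    by (intro antimono_on_interval_by_steps) blast
  moreover have "u0 \<in> {t1..t2}" using u0 by auto
  ultimately show ?thesis unfolding cap_unimodal_def by blast
qed

lemma cap_unimodal_Min:
  assumes cap: "cap_unimodal h t1 t2" and "t1 \<le> t2"
  shows "Min (h ` {t1..t2}) = min (h t1) (h t2)"
proof (rule Min_eqI)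
  show "min (h t1) (h t2) \<in> h ` {t1..t2}" using \<open>t1 \<le> t2\<close> by (auto simp: min_def)
next
  fix y assume "y \<in> h ` {t1..t2}"
  then obtain t where t: "t \<in> {t1..t2}" "y = h t" by auto
  have "h t1 \<le> h t \<or> h t2 \<le> h t"
    using cap unfolding cap_unimodal_def
  proof (elim disjE bexE conjE)
    fix ts assume "ts \<in> {t1..t2}"
      and up: "\<forall>a\<in>{t1..ts}. \<forall>b\<in>{t1..ts}. a \<le> b \<longrightarrow> h a \<le> h b"
      and down: "\<forall>a\<in>{ts..t2}. \<forall>b\<in>{ts..t2}. a \<le> b \<longrightarrow> h b \<le> h a"
    show ?thesis
    proof (cases "t \<le> ts")
      case True
      then show ?thesis using up t \<open>ts \<in> {t1..t2}\<close> by auto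
    next
      case False
      then show ?thesis using down t \<open>ts \<in> {t1..t2}\<close> by auto
    qed
  qed (use t in auto)
  then show "min (h t1) (h t2) \<le> y" using t by linarith
qed simp

lemma Max_le_by_unit_growth:
  fixes h :: "nat \<Rightarrow> nat"
  assumes step: "\<And>t. t1 \<le> t \<Longrightarrow> h (Suc t) \<le> Suc (h t)" and "t1 \<le> t2"
  shows "Max (h ` {t1..t2}) \<le> t2 - t1 + h t1"
proof (rule Max.boundedI)
  fix y assume "y \<in> h ` {t1..t2}"
  then obtain t where "t1 \<le> t" "t \<le> t2" "y = h t" by auto
  moreover have "h t \<le> t - t1 + h t1"
    using \<open>t1 \<le> t\<close> by (induction t rule: dec_induct) (use step in force)+
  ultimately show "y \<le> t2 - t1 + h t1" by linarith
qed (use \<open>t1 \<le> t2\<close> in auto)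

theorem mainTheorem1:
  fixes x :: "nat \<Rightarrow> real"
  assumes nonneg: "\<forall>k\<ge>1. 0 \<le> x k"
  shows "(\<forall>t\<ge>1. \<forall>s1 s2. 0 \<le> s1 \<longrightarrow> s1 \<le> s2 \<longrightarrow> M t x s1 \<le> M t x s2)
    \<and> (\<forall>s t1 t2. 0 \<le> s \<longrightarrow> 1 \<le> t1 \<longrightarrow> t1 \<le> t2 \<longrightarrow>
          cap_unimodal (\<lambda>t. M t x s) t1 t2
          \<and> Min ((\<lambda>t. M t x s) ` {t1..t2}) = min (M t1 x s) (M t2 x s))
    \<and> (\<forall>s t1 t2. 0 \<le> s \<longrightarrow> 1 \<le> t1 \<longrightarrow> t1 \<le> t2 \<longrightarrow>
          Max ((\<lambda>t. M t x s) ` {t1..t2}) \<le> t2 - t1 + M t1 x s)"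
proof (intro conjI allI impI)
  fix t :: nat and s1 s2 :: real
  assume "t \<ge> 1" "0 \<le> s1" "s1 \<le> s2"
  then show "M t x s1 \<le> M t x s2" using M_mono_budget[OF nonneg] by blast
next
  fix s :: real and t1 t2 :: nat
  assume "0 \<le> s" "1 \<le> t1" "t1 \<le> t2"
  then show cap: "cap_unimodal (\<lambda>t. M t x s) t1 t2"
    using no_recovery_cap_unimodal[OF M_no_recovery[OF nonneg]] by blast
  show "Min ((\<lambda>t. M t x s) ` {t1..t2}) = min (M t1 x s) (M t2 x s)"
    using cap_unimodal_Min[OF cap \<open>t1 \<le> t2\<close>] .
next
  fix s :: real and t1 t2 :: nat
  assume "0 \<le> s" "1 \<le> t1" "t1 \<le> t2"
  then show "Max ((\<lambda>t. M t x s) ` {t1..t2}) \<le> t2 - t1 + M t1 x s"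
    using Max_le_by_unit_growth[of t1 "\<lambda>t. M t x s"] M_Suc_le[OF nonneg] by simp
qed

end
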